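(* Let $U\in\mathbb{U}_N$ and $\delta\ge0$. If at least a $2/3$ fraction of the vectors $\vec{x}\in\mathbb{Z}_4^n$ satisfy $D(U\sigma_{\vec{x}}U^\dagger,\mathcal{P}_n)\le\delta$, then $D(U\sigma_{\vec{y}}U^\dagger,\mathcal{P}_n)\le 2\delta$ for every $\vec{y}\in\mathbb{Z}_4^n$.
   Context: $n\ge1$, $N=2^n$, $\mathbb{U}_N$ the $N\times N$ unitaries. Pauli matrices $\sigma_0=I,\sigma_1=X,\sigma_2=Y,\sigma_3=Z$; for $\vec{x}\in\mathbb{Z}_4^n=\{0,1,2,3\}^n$, $\sigma_{\vec{x}}=\sigma_{x_1}\otimes\cdots\otimes\sigma_{x_n}$. Pauli group $\mathcal{P}_n=\{i^k\sigma_{\vec{x}}: k\in\{0,1,2,3\},\vec{x}\in\mathbb{Z}_4^n\}$. $\|A\|=\sqrt{\mathrm{tr}(A^\dagger A)}$; $D(A,B)=\min_{\theta\in[0,2\pi)}\frac{1}{\sqrt{2N}}\|e^{i\theta}A-B\|$; $D(A,\mathcal{S})=\inf_{B\in\mathcal{S}}D(A,B)$. *)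

theory Defs
  imports Complex_Main "Jordan_Normal_Form.Matrix"
begin

definition adj :: "complex mat \<Rightarrow> complex mat" where
  "adj A = mat (dim_col A) (dim_row A) (\<lambda>(i,j). cnj (A $$ (j,i)))"

definition mtrace :: "complex mat \<Rightarrow> complex" where
  "mtrace A = (\<Sum>i<dim_row A. A $$ (i,i))"

definition unitary :: "nat \<Rightarrow> complex mat \<Rightarrow> bool" where
  "unitary N U \<longleftrightarrow> U \<in> carrier_mat N N \<and> adj U * U = 1\<^sub>m N \<and> U * adj U = 1\<^sub>m N"

definition kron :: "complex mat \<Rightarrow> complex mat \<Rightarrow> complex mat" where
  "kron A B = mat (dim_row A * dim_row B) (dim_col A * dim_col B)
     (\<lambda>(i,j). A $$ (i div dim_row B, j div dim_col B) * B $$ (i mod dim_row B, j mod dim_col B))"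

(* single-qubit Pauli matrices sigma_0 = I, sigma_1 = X, sigma_2 = Y, sigma_3 = Z *)
definition pauli1 :: "nat \<Rightarrow> complex mat" where
  "pauli1 k = (if k = 0 then mat_of_rows_list 2 [[1, 0], [0, 1]]
     else if k = 1 then mat_of_rows_list 2 [[0, 1], [1, 0]]
     else if k = 2 then mat_of_rows_list 2 [[0, -\<i>], [\<i>, 0]]
     else mat_of_rows_list 2 [[1, 0], [0, -1]])"

(* Z_4^n as lists of length n with entries in {0,1,2,3} *)
definition pauli_idx :: "nat \<Rightarrow> nat list set" where
  "pauli_idx n = {xs. length xs = n \<and> set xs \<subseteq> {0..<4}}"

definition pauli_str :: "nat list \<Rightarrow> complex mat" where
  "pauli_str xs = foldr (\<lambda>k M. kron (pauli1 k) M) xs (1\<^sub>m 1)"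

definition pauli_group :: "nat \<Rightarrow> complex mat set" where
  "pauli_group n = {(\<i> ^ k) \<cdot>\<^sub>m pauli_str xs | k xs. k \<in> {0..<4} \<and> xs \<in> pauli_idx n}"

definition fnorm :: "complex mat \<Rightarrow> real" where
  "fnorm A = sqrt (Re (mtrace (adj A * A)))"

definition phase_dist :: "complex mat \<Rightarrow> complex mat \<Rightarrow> real" where
  "phase_dist A B = (INF \<theta>\<in>{0..<2*pi}. fnorm (exp (\<i> * complex_of_real \<theta>) \<cdot>\<^sub>m A - B)
                                       / sqrt (2 * real (dim_row A)))"

definition set_dist :: "complex mat \<Rightarrow> complex mat set \<Rightarrow> real" where
  "set_dist A S = (INF B\<in>S. phase_dist A B)"

end

theory Submission
  imports Defs "HOL-Analysis.L2_Norm"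
begin

unbundle bit_operations_syntax

text \<open>
  Write \<open>A\<^sub>x = U \<sigma>\<^sub>x U\<^sup>\<dagger>\<close> and call
  \<open>x \<in> \<int>\<^sub>4\<^sup>n\<close> good if \<open>D(A\<^sub>x, \<P>\<^sub>n) \<le> \<delta>\<close>.  Encoding \<open>I, X, Y, Z\<close> as \<open>0, 1, 2, 3\<close>, Pauli
  strings multiply qubitwise by XOR up to a power of \<open>\<i>\<close>: \<open>\<sigma>\<^sub>x \<sigma>\<^bsub>x \<oplus> y\<^esub> = \<i>\<^sup>k \<sigma>\<^sub>y\<close>.
  Hence \<open>A\<^sub>y = \<i>\<^sup>j A\<^sub>x A\<^bsub>x \<oplus> y\<^esub>\<close> for every \<open>x\<close>.  Since more than half of all \<open>x\<close> are good
  and \<open>x \<mapsto> x \<oplus> y\<close> is a bijection, some good \<open>x\<close> has good \<open>x \<oplus> y\<close>.  Finally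
  \<open>D(c A B, \<P>\<^sub>n) \<le> D(A, \<P>\<^sub>n) + D(B, \<P>\<^sub>n)\<close> for unitary \<open>B\<close>, because \<open>\<P>\<^sub>n\<close> consists of
  unitaries closed under phase-twisted products and the Frobenius norm is unitarily invariant:
  \<open>X Y - P Q = (X - P) Y + P (Y - Q)\<close>.
\<close>

lemma adj_dim [simp]: "dim_row (adj A) = dim_col A" "dim_col (adj A) = dim_row A"
  by (auto simp: adj_def)

lemma adj_index [simp]: "i < dim_col A \<Longrightarrow> j < dim_row A \<Longrightarrow> adj A $$ (i,j) = cnj (A $$ (j,i))"
  by (auto simp: adj_def)

lemma adj_carrier [simp]: "A \<in> carrier_mat r c \<Longrightarrow> adj A \<in> carrier_mat c r"
  unfolding carrier_mat_def by simp

lemma adj_adj [simp]: "adj (adj A) = A"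
  by (rule eq_matI) auto

lemma adj_one [simp]: "adj (1\<^sub>m n) = 1\<^sub>m n"
  by (rule eq_matI) auto

lemma adj_smult: "adj (c \<cdot>\<^sub>m A) = cnj c \<cdot>\<^sub>m adj A"
  by (rule eq_matI) auto

lemma row_col_sum: "A \<in> carrier_mat a b \<Longrightarrow> B \<in> carrier_mat b c \<Longrightarrow> i < a \<Longrightarrow> j < c \<Longrightarrow>
    row A i \<bullet> col B j = (\<Sum>k<b. A $$ (i,k) * B $$ (k,j))"
  by (auto simp: scalar_prod_def lessThan_atLeast0 intro!: sum.cong)

lemma mult_index: "A \<in> carrier_mat a b \<Longrightarrow> B \<in> carrier_mat b c \<Longrightarrow> i < a \<Longrightarrow> j < c \<Longrightarrow>
    (A * B) $$ (i,j) = (\<Sum>k<b. A $$ (i,k) * B $$ (k,j))"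
  by (auto simp: scalar_prod_def lessThan_atLeast0 intro!: sum.cong)

lemma adj_mult:
  assumes "A \<in> carrier_mat a b" "B \<in> carrier_mat b c"
  shows "adj (A * B) = adj B * adj A"
proof (rule eq_matI)
  fix i j assume "i < dim_row (adj B * adj A)" "j < dim_col (adj B * adj A)"
  hence i: "i < c" and j: "j < a" using assms by auto
  have "adj (A * B) $$ (i,j) = cnj ((A * B) $$ (j,i))" using assms i j by simp
  also have "\<dots> = (\<Sum>k<b. cnj (A $$ (j,k)) * cnj (B $$ (k,i)))"
    using mult_index[OF assms j i] by simp
  also have "\<dots> = (adj B * adj A) $$ (i,j)"
    using assms i j by (subst mult_index[of _ c b _ a]) (auto simp: mult.commute)
  finally show "adj (A * B) $$ (i,j) = (adj B * adj A) $$ (i,j)" .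
qed (use assms in auto)

lemma mtrace_comm:
  assumes "A \<in> carrier_mat a b" "B \<in> carrier_mat b a"
  shows "mtrace (A * B) = mtrace (B * A)"
proof -
  have "mtrace (A * B) = (\<Sum>i<a. \<Sum>k<b. A $$ (i,k) * B $$ (k,i))"
    unfolding mtrace_def using assms by (auto intro!: sum.cong simp: row_col_sum[OF assms])
  also have "\<dots> = (\<Sum>k<b. \<Sum>i<a. B $$ (k,i) * A $$ (i,k))"
    by (subst sum.swap) (simp add: mult.commute)
  also have "\<dots> = mtrace (B * A)"
    unfolding mtrace_def using assms by (auto intro!: sum.cong simp: row_col_sum[OF assms(2,1)])
  finally show ?thesis .
qed

lemma smult_smult_mat: "a \<cdot>\<^sub>m (b \<cdot>\<^sub>m A) = (a * b :: complex) \<cdot>\<^sub>m A"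
  by (rule eq_matI) auto

lemma one_smult_mat [simp]: "(1::complex) \<cdot>\<^sub>m A = A"
  by (rule eq_matI) auto

lemma smult_mult_smult:
  assumes "A \<in> carrier_mat a b" "B \<in> carrier_mat b c"
  shows "(x \<cdot>\<^sub>m A) * (y \<cdot>\<^sub>m B) = (x * y) \<cdot>\<^sub>m (A * B :: complex mat)"
proof -
  have "(x \<cdot>\<^sub>m A) * (y \<cdot>\<^sub>m B) = x \<cdot>\<^sub>m (A * (y \<cdot>\<^sub>m B))"
    using assms by (intro mult_smult_assoc_mat) auto
  also have "A * (y \<cdot>\<^sub>m B) = y \<cdot>\<^sub>m (A * B)"
    by (rule mult_smult_distrib[OF assms])
  finally show ?thesis by (simp add: smult_smult_mat)
qed

section \<open>The Frobenius norm\<close>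

text \<open>The Frobenius norm is the Euclidean norm of the family of entries; this gives
  nonnegativity, homogeneity and the triangle inequality for free.\<close>

lemma fnorm_eq_L2_set:
  assumes "A \<in> carrier_mat r c"
  shows "fnorm A = L2_set (\<lambda>(k,j). cmod (A $$ (k,j))) ({..<r} \<times> {..<c})"
proof -
  have "mtrace (adj A * A) = (\<Sum>j<c. \<Sum>k<r. adj A $$ (j,k) * A $$ (k,j))"
    unfolding mtrace_def using assms
    by (auto intro!: sum.cong simp: row_col_sum[OF adj_carrier[OF assms] assms])
  also have "\<dots> = (\<Sum>j<c. \<Sum>k<r. complex_of_real ((cmod (A $$ (k,j)))\<^sup>2))"
  proof (intro sum.cong refl)
    fix j k assume "j \<in> {..<c}" "k \<in> {..<r}"
    hence "adj A $$ (j,k) = cnj (A $$ (k,j))" using assms by simp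
    thus "adj A $$ (j,k) * A $$ (k,j) = complex_of_real ((cmod (A $$ (k,j)))\<^sup>2)"
      by (simp only: complex_norm_square mult.commute)
  qed
  finally have "Re (mtrace (adj A * A)) = (\<Sum>j<c. \<Sum>k<r. (cmod (A $$ (k,j)))\<^sup>2)"
    by simp
  also have "\<dots> = (\<Sum>(k,j)\<in>{..<r} \<times> {..<c}. (cmod (A $$ (k,j)))\<^sup>2)"
    by (subst sum.swap) (simp add: sum.cartesian_product)
  finally show ?thesis
    unfolding fnorm_def L2_set_def by (simp add: case_prod_beta)
qed

lemma fnorm_nonneg: "fnorm A \<ge> 0"
  by (simp add: fnorm_eq_L2_set[OF carrier_mat_triv] L2_set_nonneg)

lemma fnorm_smult: "fnorm (c \<cdot>\<^sub>m A) = cmod c * fnorm A"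
proof -
  let ?I = "{..<dim_row A} \<times> {..<dim_col A}"
  have "fnorm (c \<cdot>\<^sub>m A) = L2_set (\<lambda>(k,j). cmod ((c \<cdot>\<^sub>m A) $$ (k,j))) ?I"
    by (rule fnorm_eq_L2_set) auto
  also have "\<dots> = L2_set (\<lambda>x. cmod c * (\<lambda>(k,j). cmod (A $$ (k,j))) x) ?I"
    by (rule L2_set_cong) (auto simp: norm_mult)
  also have "\<dots> = cmod c * fnorm A"
    by (subst L2_set_right_distrib[symmetric]) (auto simp: fnorm_eq_L2_set[OF carrier_mat_triv])
  finally show ?thesis .
qed

lemma fnorm_triangle:
  assumes "A \<in> carrier_mat r c" "B \<in> carrier_mat r c"
  shows "fnorm (A + B) \<le> fnorm A + fnorm B"
proof -
  have "fnorm (A + B) = L2_set (\<lambda>(k,j). cmod ((A + B) $$ (k,j))) ({..<r} \<times> {..<c})"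
    using assms by (intro fnorm_eq_L2_set) auto
  also have "\<dots> \<le> L2_set (\<lambda>x. (\<lambda>(k,j). cmod (A $$ (k,j))) x + (\<lambda>(k,j). cmod (B $$ (k,j))) x)
                          ({..<r} \<times> {..<c})"
    by (rule L2_set_mono) (use assms in \<open>auto intro: norm_triangle_ineq\<close>)
  also have "\<dots> \<le> fnorm A + fnorm B"
    unfolding fnorm_eq_L2_set[OF assms(1)] fnorm_eq_L2_set[OF assms(2)] by (rule L2_set_triangle_ineq)
  finally show ?thesis .
qed

lemma fnorm_mult_right_isometry:
  assumes X: "X \<in> carrier_mat N N" and W: "W \<in> carrier_mat N N" and W_unit: "W * adj W = 1\<^sub>m N"
  shows "fnorm (X * W) = fnorm X"
proof -
  have aX: "adj X \<in> carrier_mat N N" and aW: "adj W \<in> carrier_mat N N" using X W by auto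
  define M where "M = adj X * X * W"
  have M: "M \<in> carrier_mat N N" using X W aX unfolding M_def by (metis mult_carrier_mat)
  have "adj (X * W) * (X * W) = adj W * M"
    using X W aX aW unfolding M_def by (simp add: adj_mult[OF X W] assoc_mult_mat[of _ N N _ N _ N])
  hence "mtrace (adj (X * W) * (X * W)) = mtrace (M * adj W)"
    using mtrace_comm[OF aW M] by simp
  also have "M * adj W = adj X * X * (W * adj W)"
    unfolding M_def by (rule assoc_mult_mat[of _ N N _ N _ N]) (use X W aX aW in auto)
  also have "\<dots> = adj X * X" using W_unit X aX by simp
  finally show ?thesis unfolding fnorm_def by simp
qed

lemma fnorm_mult_left_isometry:
  assumes X: "X \<in> carrier_mat N N" and W: "W \<in> carrier_mat N N" and W_unit: "adj W * W = 1\<^sub>m N"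
  shows "fnorm (W * X) = fnorm X"
proof -
  have aX: "adj X \<in> carrier_mat N N" and aW: "adj W \<in> carrier_mat N N" using X W by auto
  have "adj (W * X) * (W * X) = adj X * ((adj W * W) * X)"
    using X W aX aW by (simp add: adj_mult[OF W X] assoc_mult_mat[of _ N N _ N _ N])
  also have "\<dots> = adj X * X" using W_unit X aX by simp
  finally show ?thesis unfolding fnorm_def by simp
qed

lemma unitary_carrier: "unitary N U \<Longrightarrow> U \<in> carrier_mat N N"
  by (simp add: unitary_def)

lemma unitary_one: "unitary N (1\<^sub>m N)"
  by (simp add: unitary_def)

lemma unitary_adj: "unitary N U \<Longrightarrow> unitary N (adj U)"
  by (simp add: unitary_def)

lemma unitary_mult:
  assumes "unitary N A" "unitary N B"
  shows "unitary N (A * B)"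
proof -
  have Ac: "A \<in> carrier_mat N N" "adj A \<in> carrier_mat N N" and Au: "adj A * A = 1\<^sub>m N" "A * adj A = 1\<^sub>m N"
    using assms(1) unfolding unitary_def by auto
  have Bc: "B \<in> carrier_mat N N" "adj B \<in> carrier_mat N N" and Bu: "adj B * B = 1\<^sub>m N" "B * adj B = 1\<^sub>m N"
    using assms(2) unfolding unitary_def by auto
  have AB: "A * B \<in> carrier_mat N N" using Ac(1) Bc(1) by (rule mult_carrier_mat)
  have "adj (A * B) * (A * B) = adj B * ((adj A * A) * B)"
    unfolding adj_mult[OF Ac(1) Bc(1)] assoc_mult_mat[OF Bc(2) Ac(2) AB]
      assoc_mult_mat[OF Ac(2) Ac(1) Bc(1)] by (rule refl)
  also have "\<dots> = 1\<^sub>m N"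
    unfolding Au(1) left_mult_one_mat[OF Bc(1)] by (rule Bu(1))
  finally have left: "adj (A * B) * (A * B) = 1\<^sub>m N" .
  have "(A * B) * adj (A * B) = A * ((B * adj B) * adj A)"
    unfolding adj_mult[OF Ac(1) Bc(1)] assoc_mult_mat[OF Ac(1) Bc(1) mult_carrier_mat[OF Bc(2) Ac(2)]]
      assoc_mult_mat[OF Bc(1) Bc(2) Ac(2)] by (rule refl)
  also have "\<dots> = 1\<^sub>m N"
    unfolding Bu(2) left_mult_one_mat[OF Ac(2)] by (rule Au(2))
  finally have right: "(A * B) * adj (A * B) = 1\<^sub>m N" .
  show ?thesis unfolding unitary_def using AB left right by blast
qed

lemma unitary_smult:
  assumes "cmod c = 1" "unitary N U"
  shows "unitary N (c \<cdot>\<^sub>m U)"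
proof -
  have U: "U \<in> carrier_mat N N" "adj U \<in> carrier_mat N N" using assms(2) unfolding unitary_def by auto
  have "c * cnj c = 1" using complex_norm_square[of c] assms(1) by simp
  then have c: "c * cnj c = 1" "cnj c * c = 1" by (simp_all add: mult.commute)
  have "adj (c \<cdot>\<^sub>m U) * (c \<cdot>\<^sub>m U) = (cnj c * c) \<cdot>\<^sub>m (adj U * U)"
    unfolding adj_smult by (rule smult_mult_smult[OF U(2) U(1)])
  moreover have "(c \<cdot>\<^sub>m U) * adj (c \<cdot>\<^sub>m U) = (c * cnj c) \<cdot>\<^sub>m (U * adj U)"
    unfolding adj_smult by (rule smult_mult_smult[OF U(1) U(2)])
  ultimately show ?thesis using assms(2) c by (simp add: unitary_def)
qed

lemma unitary_conj:
  assumes "unitary N U" "unitary N W"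
  shows "unitary N (U * W * adj U)"
  by (rule unitary_mult[OF unitary_mult[OF assms] unitary_adj[OF assms(1)]])

text \<open>The key estimate: if \<open>X \<approx> P\<close> and \<open>Y \<approx> Q\<close> with \<open>Y, P\<close> unitary, then
  \<open>X Y \<approx> P Q\<close>, the errors adding up, because \<open>X Y - P Q = (X - P) Y + P (Y - Q)\<close>.\<close>

lemma mult_diff_split:
  fixes X Y P Q :: "complex mat"
  assumes "X \<in> carrier_mat N N" "Y \<in> carrier_mat N N" "P \<in> carrier_mat N N" "Q \<in> carrier_mat N N"
  shows "(X - P) * Y + P * (Y - Q) = X * Y - P * Q"
proof (rule eq_matI)
  fix i j assume "i < dim_row (X * Y - P * Q)" "j < dim_col (X * Y - P * Q)"
  hence ij: "i < N" "j < N" using assms by auto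
  have "X - P \<in> carrier_mat N N" "Y - Q \<in> carrier_mat N N" using assms by auto
  then show "((X - P) * Y + P * (Y - Q)) $$ (i,j) = (X * Y - P * Q) $$ (i,j)"
    using assms ij
    by (simp add: row_col_sum[of _ N N _ N] sum.distrib[symmetric])
      (simp add: right_diff_distrib left_diff_distrib sum_subtractf)
qed (use assms in auto)

lemma fnorm_mult_diff:
  assumes X: "X \<in> carrier_mat N N" and Q: "Q \<in> carrier_mat N N"
    and Y: "unitary N Y" and P: "unitary N P"
  shows "fnorm (X * Y - P * Q) \<le> fnorm (X - P) + fnorm (Y - Q)"
proof -
  have Yc: "Y \<in> carrier_mat N N" "Y * adj Y = 1\<^sub>m N" and Pc: "P \<in> carrier_mat N N" "adj P * P = 1\<^sub>m N"
    using Y P by (auto simp: unitary_def)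
  have "fnorm (X * Y - P * Q) = fnorm ((X - P) * Y + P * (Y - Q))"
    by (simp add: mult_diff_split[OF X Yc(1) Pc(1) Q])
  also have "\<dots> \<le> fnorm ((X - P) * Y) + fnorm (P * (Y - Q))"
    by (rule fnorm_triangle[of _ N N]) (use X Yc Pc Q in auto)
  also have "fnorm ((X - P) * Y) = fnorm (X - P)"
    by (rule fnorm_mult_right_isometry[OF _ Yc]) (use X Pc in auto)
  also have "fnorm (P * (Y - Q)) = fnorm (Y - Q)"
    by (rule fnorm_mult_left_isometry[OF _ Pc]) (use Yc Q in auto)
  finally show ?thesis .
qed

section \<open>The Kronecker product\<close>

lemma kron_dim [simp]:
  "dim_row (kron A B) = dim_row A * dim_row B" "dim_col (kron A B) = dim_col A * dim_col B"
  by (auto simp: kron_def)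

lemma kron_index [simp]: "i < dim_row A * dim_row B \<Longrightarrow> j < dim_col A * dim_col B \<Longrightarrow>
    kron A B $$ (i,j) = A $$ (i div dim_row B, j div dim_col B) * B $$ (i mod dim_row B, j mod dim_col B)"
  by (auto simp: kron_def)

lemma kron_carrier: "A \<in> carrier_mat a b \<Longrightarrow> B \<in> carrier_mat c d \<Longrightarrow> kron A B \<in> carrier_mat (a * c) (b * d)"
  unfolding carrier_mat_def by simp

lemma div_mod_bounds:
  fixes i :: nat assumes "i < a * b"
  shows "i div b < a" "i mod b < b"
proof -
  have "b > 0" using assms by (cases b) auto
  then show "i div b < a" "i mod b < b" using assms by (simp_all add: less_mult_imp_div_less)
qed

lemma sum_div_mod:
  fixes b e :: nat
  shows "(\<Sum>k<b * e. f (k div e) (k mod e)) = (\<Sum>p<b. \<Sum>q<e. f p q)"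
proof -
  have "(\<Sum>k<b * e. f (k div e) (k mod e)) = (\<Sum>(p,q)\<in>{..<b} \<times> {..<e}. f p q)"
  proof (rule sum.reindex_bij_witness[where i = "\<lambda>(p,q). p * e + q" and j = "\<lambda>k. (k div e, k mod e)"])
    fix pq assume "pq \<in> {..<b} \<times> {..<e}"
    then obtain p q where pq: "pq = (p,q)" "p < b" "q < e" by blast
    have "p * e + q < Suc p * e" using pq by simp
    also have "\<dots> \<le> b * e" using pq by (intro mult_le_mono1) simp
    finally show "(\<lambda>(p,q). p * e + q) pq \<in> {..<b * e}" using pq by simp
    show "(\<lambda>k. (k div e, k mod e)) ((\<lambda>(p,q). p * e + q) pq) = pq" using pq by simp
  qed (auto simp: div_mod_bounds)
  then show ?thesis by (simp add: sum.cartesian_product)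
qed

lemma kron_mult:
  assumes A: "A \<in> carrier_mat a b" and C: "C \<in> carrier_mat b c"
    and B: "B \<in> carrier_mat d e" and D: "D \<in> carrier_mat e f"
  shows "kron A B * kron C D = kron (A * C) (B * D)"
proof (rule eq_matI)
  fix i j assume "i < dim_row (kron (A * C) (B * D))" "j < dim_col (kron (A * C) (B * D))"
  hence i: "i < a * d" and j: "j < c * f" using A B C D by auto
  note ib = div_mod_bounds[OF i] and jb = div_mod_bounds[OF j]
  have "(kron A B * kron C D) $$ (i,j) = (\<Sum>k<b * e. kron A B $$ (i,k) * kron C D $$ (k,j))"
    by (rule mult_index[OF kron_carrier[OF A B] kron_carrier[OF C D] i j])
  also have "\<dots> = (\<Sum>k<b * e. (\<lambda>p q. (A $$ (i div d, p) * C $$ (p, j div f))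
                                    * (B $$ (i mod d, q) * D $$ (q, j mod f))) (k div e) (k mod e))"
  proof (rule sum.cong[OF refl])
    fix k assume "k \<in> {..<b * e}"
    then show "kron A B $$ (i,k) * kron C D $$ (k,j) = (\<lambda>p q. (A $$ (i div d, p) * C $$ (p, j div f))
                 * (B $$ (i mod d, q) * D $$ (q, j mod f))) (k div e) (k mod e)"
      using A B C D i j by (simp add: ac_simps)
  qed
  also have "\<dots> = (\<Sum>p<b. \<Sum>q<e. (A $$ (i div d, p) * C $$ (p, j div f)) * (B $$ (i mod d, q) * D $$ (q, j mod f)))"
    by (rule sum_div_mod)
  also have "\<dots> = (\<Sum>p<b. A $$ (i div d, p) * C $$ (p, j div f)) * (\<Sum>q<e. B $$ (i mod d, q) * D $$ (q, j mod f))"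
    by (simp add: sum_product)
  also have "\<dots> = kron (A * C) (B * D) $$ (i,j)"
    using A B C D i j mult_index[OF A C ib(1) jb(1)] mult_index[OF B D ib(2) jb(2)] by simp
  finally show "(kron A B * kron C D) $$ (i,j) = kron (A * C) (B * D) $$ (i,j)" .
qed (use A B C D in auto)

lemma kron_smult_left: "kron (c \<cdot>\<^sub>m A) B = c \<cdot>\<^sub>m kron A B"
  by (rule eq_matI) (auto simp: div_mod_bounds)

lemma kron_smult_right: "kron A (c \<cdot>\<^sub>m B) = c \<cdot>\<^sub>m kron A B"
  by (rule eq_matI) (auto simp: div_mod_bounds)

lemma kron_adj: "adj (kron A B) = kron (adj A) (adj B)"
  by (rule eq_matI) (auto simp: div_mod_bounds)

lemma kron_one: "kron (1\<^sub>m a) (1\<^sub>m b) = 1\<^sub>m (a * b)"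
proof (rule eq_matI)
  fix i j assume "i < dim_row (1\<^sub>m (a * b))" "j < dim_col (1\<^sub>m (a * b))"
  hence i: "i < a * b" and j: "j < a * b" by auto
  have "(i = j) = (i div b = j div b \<and> i mod b = j mod b)"
    by (metis div_mult_mod_eq)
  then show "kron (1\<^sub>m a) (1\<^sub>m b) $$ (i,j) = 1\<^sub>m (a * b) $$ (i,j)"
    using i j by (simp add: div_mod_bounds)
qed auto

lemma kron_unitary:
  assumes "unitary a A" "unitary b B"
  shows "unitary (a * b) (kron A B)"
proof -
  have A: "A \<in> carrier_mat a a" "adj A \<in> carrier_mat a a"
    and B: "B \<in> carrier_mat b b" "adj B \<in> carrier_mat b b"
    using assms unfolding unitary_def by auto
  have "adj (kron A B) * kron A B = kron (adj A * A) (adj B * B)"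
    unfolding kron_adj by (rule kron_mult[OF A(2) A(1) B(2) B(1)])
  moreover have "kron A B * adj (kron A B) = kron (A * adj A) (B * adj B)"
    unfolding kron_adj by (rule kron_mult[OF A(1) A(2) B(1) B(2)])
  ultimately show ?thesis
    using assms kron_carrier[OF A(1) B(1)] by (simp add: unitary_def kron_one)
qed

section \<open>Single-qubit Pauli matrices\<close>

lemma pauli1_dim [simp]: "dim_row (pauli1 k) = 2" "dim_col (pauli1 k) = 2"
  by (simp_all add: pauli1_def mat_of_rows_list_def)

lemma pauli1_carrier [simp]: "pauli1 k \<in> carrier_mat 2 2"
  by (rule carrier_matI) simp_all

text \<open>Indices beyond \<open>3\<close> all denote \<open>Z\<close>, so every statement about \<open>pauli1 k\<close> reduces to
  the four genuine Pauli matrices.\<close>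

lemma pauli1_min3: "pauli1 k = pauli1 (min k 3)"
  by (simp add: pauli1_def)

lemma pauli1_cases:
  assumes "\<And>j. j \<in> {0, 1, 2, 3} \<Longrightarrow> P (pauli1 j)"
  shows "P (pauli1 k)"
proof -
  define j where "j = min k 3"
  have "j < 4" unfolding j_def by simp
  then have "j \<in> {0, 1, 2, 3}" by auto
  then have "P (pauli1 j)" by (rule assms)
  then show ?thesis unfolding j_def by (simp flip: pauli1_min3)
qed

lemma mat2_eqI:
  fixes A B :: "complex mat"
  assumes "A \<in> carrier_mat 2 2" "B \<in> carrier_mat 2 2"
    "A $$ (0,0) = B $$ (0,0)" "A $$ (0,1) = B $$ (0,1)" "A $$ (1,0) = B $$ (1,0)" "A $$ (1,1) = B $$ (1,1)"
  shows "A = B"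
proof (rule eq_matI)
  fix i j assume "i < dim_row B" "j < dim_col B"
  hence "i = 0 \<or> i = 1" "j = 0 \<or> j = 1" using assms by auto
  thus "A $$ (i,j) = B $$ (i,j)" using assms by auto
qed (use assms in auto)

lemma mult2_index:
  assumes "A \<in> carrier_mat 2 2" "B \<in> carrier_mat 2 2" "i < 2" "j < 2"
  shows "(A * B) $$ (i,j) = A $$ (i,0) * B $$ (0,j) + A $$ (i,1) * B $$ (1,j)"
proof -
  have "{..<2::nat} = {0, 1}" by auto
  then show ?thesis using mult_index[OF assms] by simp
qed

text \<open>The Pauli matrices are Hermitian involutions, hence unitary.\<close>

lemma pauli1_hermitian: "adj (pauli1 k) = pauli1 k"
  by (rule pauli1_cases[where P = "\<lambda>M. adj M = M"])
    (auto intro!: mat2_eqI simp: pauli1_def mat_of_rows_list_def)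

lemma pauli1_mult_carrier [simp]: "pauli1 a * pauli1 b \<in> carrier_mat 2 2"
  by (rule mult_carrier_mat[OF pauli1_carrier pauli1_carrier])

lemma pauli1_mult_index:
  "i < 2 \<Longrightarrow> j < 2 \<Longrightarrow>
    (pauli1 a * pauli1 b) $$ (i,j) = pauli1 a $$ (i,0) * pauli1 b $$ (0,j) + pauli1 a $$ (i,1) * pauli1 b $$ (1,j)"
  by (rule mult2_index) simp_all

lemma pauli1_square: "pauli1 k * pauli1 k = 1\<^sub>m 2"
  by (rule pauli1_cases[where P = "\<lambda>M. M * M = 1\<^sub>m 2"])
    (auto intro!: mat2_eqI simp del: index_mult_mat simp: pauli1_mult_index;
     simp add: pauli1_def mat_of_rows_list_def)

lemma pauli1_unitary: "unitary 2 (pauli1 k)"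
  by (simp add: unitary_def pauli1_hermitian pauli1_square)

text \<open>Products of Pauli matrices: encoding \<open>I, X, Y, Z\<close> as \<open>0, 1, 2, 3\<close>, the product
  \<open>\<sigma>\<^sub>a \<sigma>\<^sub>b\<close> is \<open>\<sigma>\<^bsub>a XOR b\<^esub>\<close> up to a power of \<open>\<i>\<close>, namely \<open>\<i>\<close> for the cyclic
  products \<open>XY, YZ, ZX\<close>, \<open>-\<i>\<close> for the anticyclic ones, and \<open>1\<close> otherwise.\<close>

definition pauli_phase :: "nat \<Rightarrow> nat \<Rightarrow> nat" where
  "pauli_phase a b =
     (if a = 0 \<or> b = 0 \<or> a = b then 0 else if (a, b) \<in> {(1,2), (2,3), (3,1)} then 1 else 3)"

lemma pauli1_mult:
  assumes "a < 4" "b < 4"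
  shows "pauli1 a * pauli1 b = (\<i> ^ pauli_phase a b) \<cdot>\<^sub>m pauli1 (a XOR b)"
proof -
  have "a \<in> {0,1,2,3}" "b \<in> {0,1,2,3}" using assms by auto
  then show ?thesis
    by (auto intro!: mat2_eqI simp del: index_mult_mat simp: pauli1_mult_index;
        simp add: pauli1_def mat_of_rows_list_def pauli_phase_def power3_eq_cube)
qed

lemma pauli_str_Nil [simp]: "pauli_str [] = 1\<^sub>m 1"
  by (simp add: pauli_str_def)

lemma pauli_str_Cons [simp]: "pauli_str (a # xs) = kron (pauli1 a) (pauli_str xs)"
  by (simp add: pauli_str_def)

lemma pauli_str_unitary: "unitary (2 ^ length xs) (pauli_str xs)"
proof (induction xs)
  case Nil
  show ?case by (simp add: unitary_one)
next
  case (Cons a xs)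
  show ?case using kron_unitary[OF pauli1_unitary Cons.IH, of a] by simp
qed

lemma pauli_str_carrier: "pauli_str xs \<in> carrier_mat (2 ^ length xs) (2 ^ length xs)"
  by (rule unitary_carrier[OF pauli_str_unitary])

lemma pauli_str_mult:
  assumes "length xs = length ys" "set xs \<subseteq> {0..<4}" "set ys \<subseteq> {0..<4}"
  shows "\<exists>k. pauli_str xs * pauli_str ys = (\<i> ^ k) \<cdot>\<^sub>m pauli_str (map2 (XOR) xs ys)"
  using assms
proof (induction xs arbitrary: ys)
  case Nil
  then show ?case by (intro exI[of _ 0]) simp
next
  case (Cons a xs)
  then obtain b ys' where ys: "ys = b # ys'" by (cases ys) auto
  have ab: "a < 4" "b < 4" and len: "length ys' = length xs" using Cons.prems ys by auto
  obtain k where k: "pauli_str xs * pauli_str ys' = (\<i> ^ k) \<cdot>\<^sub>m pauli_str (map2 (XOR) xs ys')"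
    using Cons.IH[of ys'] Cons.prems ys by auto
  have S': "pauli_str ys' \<in> carrier_mat (2 ^ length xs) (2 ^ length xs)"
    using pauli_str_carrier[of ys'] len by simp
  have "pauli_str (a # xs) * pauli_str ys = kron (pauli1 a * pauli1 b) (pauli_str xs * pauli_str ys')"
    using ys by (simp add: kron_mult[OF pauli1_carrier pauli1_carrier pauli_str_carrier S'])
  also have "\<dots> = (\<i> ^ (pauli_phase a b + k)) \<cdot>\<^sub>m pauli_str (map2 (XOR) (a # xs) ys)"
    unfolding pauli1_mult[OF ab] k ys
    by (simp add: kron_smult_left kron_smult_right smult_smult_mat power_add mult.commute)
  finally show ?case by blast
qed

text \<open>Qubitwise XOR makes \<open>\<int>\<^sub>4\<^sup>n\<close> (viewed as \<open>(\<int>\<^sub>2\<^sup>2)\<^sup>n\<close>) a group of exponent two.\<close>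

lemma xor_less_4: "a < 4 \<Longrightarrow> b < 4 \<Longrightarrow> a XOR b < (4::nat)"
proof -
  assume "a < 4" "b < 4"
  then have "a \<in> {0,1,2,3}" "b \<in> {0,1,2,3}" by auto
  then show ?thesis by auto
qed

lemma pauli_idx_xor:
  assumes "xs \<in> pauli_idx n" "ys \<in> pauli_idx n"
  shows "map2 (XOR) xs ys \<in> pauli_idx n"
proof -
  have "a XOR b < 4" if "(a, b) \<in> set (zip xs ys)" for a b
    using assms set_zip_leftD[OF that] set_zip_rightD[OF that]
    by (auto simp: pauli_idx_def intro!: xor_less_4)
  then show ?thesis using assms by (auto simp: pauli_idx_def)
qed

lemma map2_xor_cancel_left:
  fixes xs ys :: "nat list"
  assumes "length xs = length ys"
  shows "map2 (XOR) xs (map2 (XOR) xs ys) = ys"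
  using assms by (induction xs ys rule: list_induct2) (simp_all flip: xor.assoc)

lemma map2_xor_cancel_right:
  fixes xs ys :: "nat list"
  assumes "length xs = length ys"
  shows "map2 (XOR) (map2 (XOR) xs ys) ys = xs"
  using assms by (induction xs ys rule: list_induct2) (simp_all add: xor.assoc)

lemma pauli_idx_finite: "finite (pauli_idx n)"
proof -
  have "pauli_idx n = {xs. set xs \<subseteq> {0..<4} \<and> length xs = n}" unfolding pauli_idx_def by auto
  thus ?thesis using finite_lists_length_eq[of "{0..<(4::nat)}" n] by simp
qed

lemma pauli_idx_nonempty: "replicate n 0 \<in> pauli_idx n"
  unfolding pauli_idx_def by auto

lemma pauli_idx_unitary: "x \<in> pauli_idx n \<Longrightarrow> unitary (2 ^ n) (pauli_str x)"
  using pauli_str_unitary[of x] by (simp add: pauli_idx_def)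

section \<open>The Pauli group\<close>

text \<open>Powers of \<open>\<i>\<close> are \<open>4\<close>-periodic, so phases \<open>\<i>\<^sup>k\<close> with \<open>k < 4\<close> suffice.\<close>

lemma i_power_mod4: "\<i> ^ m = \<i> ^ (m mod 4)"
proof -
  have "\<i> ^ m = \<i> ^ (4 * (m div 4) + m mod 4)" by simp
  also have "\<dots> = (\<i> ^ 4) ^ (m div 4) * \<i> ^ (m mod 4)" by (simp only: power_add power_mult)
  also have "\<dots> = \<i> ^ (m mod 4)" by simp
  finally show ?thesis .
qed

lemma pauli_group_unitary:
  assumes "P \<in> pauli_group n"
  shows "unitary (2 ^ n) P"
proof -
  obtain k xs where P: "P = (\<i> ^ k) \<cdot>\<^sub>m pauli_str xs" and xs: "xs \<in> pauli_idx n"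
    using assms unfolding pauli_group_def by blast
  show ?thesis unfolding P by (rule unitary_smult[OF _ pauli_idx_unitary[OF xs]]) (simp add: norm_power)
qed

lemma pauli_group_mult:
  assumes "P \<in> pauli_group n" "Q \<in> pauli_group n"
  shows "(\<i> ^ j) \<cdot>\<^sub>m (P * Q) \<in> pauli_group n"
proof -
  obtain k1 xs where P: "P = (\<i> ^ k1) \<cdot>\<^sub>m pauli_str xs" and xs: "xs \<in> pauli_idx n"
    using assms(1) unfolding pauli_group_def by blast
  obtain k2 ys where Q: "Q = (\<i> ^ k2) \<cdot>\<^sub>m pauli_str ys" and ys: "ys \<in> pauli_idx n"
    using assms(2) unfolding pauli_group_def by blast
  obtain k where k: "pauli_str xs * pauli_str ys = (\<i> ^ k) \<cdot>\<^sub>m pauli_str (map2 (XOR) xs ys)"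
    using pauli_str_mult[of xs ys] xs ys by (auto simp: pauli_idx_def)
  have Sx: "pauli_str xs \<in> carrier_mat (2 ^ n) (2 ^ n)" and Sy: "pauli_str ys \<in> carrier_mat (2 ^ n) (2 ^ n)"
    using pauli_str_carrier[of xs] pauli_str_carrier[of ys] xs ys by (auto simp: pauli_idx_def)
  have "(\<i> ^ j) \<cdot>\<^sub>m (P * Q) = (\<i> ^ j * (\<i> ^ k1 * \<i> ^ k2)) \<cdot>\<^sub>m (pauli_str xs * pauli_str ys)"
    unfolding P Q by (simp add: smult_mult_smult[OF Sx Sy] smult_smult_mat)
  also have "\<dots> = (\<i> ^ (j + k1 + k2 + k)) \<cdot>\<^sub>m pauli_str (map2 (XOR) xs ys)"
    by (simp add: k smult_smult_mat power_add mult.assoc)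
  also have "\<dots> = (\<i> ^ ((j + k1 + k2 + k) mod 4)) \<cdot>\<^sub>m pauli_str (map2 (XOR) xs ys)"
    by (subst i_power_mod4) simp
  finally show ?thesis
    using pauli_idx_xor[OF xs ys] unfolding pauli_group_def by force
qed

lemma pauli_group_nonempty: "pauli_group n \<noteq> {}"
proof -
  have "(\<i> ^ 0) \<cdot>\<^sub>m pauli_str (replicate n 0) \<in> pauli_group n"
    unfolding pauli_group_def using pauli_idx_nonempty[of n]
    by (intro CollectI exI[of _ 0] exI[of _ "replicate n 0"]) simp
  then show ?thesis by blast
qed

section \<open>Distance to a set of matrices up to a global phase\<close>

lemma phase_dist_nonneg: "phase_dist A B \<ge> 0"
  unfolding phase_dist_def by (rule cINF_greatest) (auto simp: fnorm_nonneg)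

lemma bdd_below_phase_dists: "bdd_below ((\<lambda>B. phase_dist A B) ` S)"
  by (rule bdd_belowI[of _ 0]) (auto simp: phase_dist_nonneg)

lemma bdd_below_phase_norms:
  "bdd_below ((\<lambda>\<theta>. fnorm (exp (\<i> * complex_of_real \<theta>) \<cdot>\<^sub>m A - B) / sqrt (2 * real (dim_row A))) ` T)"
  by (rule bdd_belowI[of _ 0]) (auto simp: fnorm_nonneg)

text \<open>The minimum over \<open>\<theta> \<in> [0, 2\<pi>)\<close> in \<open>D\<close> ranges over all unit complex numbers, so
  any unit phase and any member of \<open>S\<close> bound \<open>D(A, S)\<close> from above \<dots>\<close>

lemma set_dist_le:
  assumes "P \<in> S" "cmod c = 1"
  shows "set_dist A S \<le> fnorm (c \<cdot>\<^sub>m A - P) / sqrt (2 * real (dim_row A))"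
proof -
  obtain t where t: "t \<in> {0..<2*pi}" "c = Complex (cos t) (sin t)"
    using complex_unimodular_polar[OF assms(2)] by auto
  have c: "c = exp (\<i> * complex_of_real t)"
    using t(2) by (simp add: cis_conv_exp[symmetric] complex_eq_iff)
  have "set_dist A S \<le> phase_dist A P"
    unfolding set_dist_def by (rule cINF_lower[OF bdd_below_phase_dists assms(1)])
  also have "\<dots> \<le> fnorm (c \<cdot>\<^sub>m A - P) / sqrt (2 * real (dim_row A))"
    unfolding phase_dist_def c by (rule cINF_lower[OF bdd_below_phase_norms t(1)])
  finally show ?thesis .
qed

lemma set_dist_approx:
  assumes "set_dist A S < r" "S \<noteq> {}"
  shows "\<exists>P\<in>S. \<exists>c. cmod c = 1 \<and> fnorm (c \<cdot>\<^sub>m A - P) / sqrt (2 * real (dim_row A)) < r"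
proof -
  obtain P where P: "P \<in> S" "phase_dist A P < r"
    using assms cINF_less_iff[OF assms(2) bdd_below_phase_dists] unfolding set_dist_def by blast
  have nonempty: "{0..<2*pi} \<noteq> {}" using pi_gt_zero by auto
  obtain t where "fnorm (exp (\<i> * complex_of_real t) \<cdot>\<^sub>m A - P) / sqrt (2 * real (dim_row A)) < r"
    using P(2) cINF_less_iff[OF nonempty bdd_below_phase_norms] unfolding phase_dist_def by blast
  moreover have "cmod (exp (\<i> * complex_of_real t)) = 1" by simp
  ultimately show ?thesis using P(1) by blast
qed

text \<open>A triangle inequality for the distance to a set \<open>S\<close> of unitaries closed under
  (phase-twisted) products: if \<open>A \<approx> P\<close> and \<open>B \<approx> Q\<close> up to phases, then
  \<open>c A B \<approx> c P Q \<in> S\<close>, with the errors adding up as in \<open>fnorm_mult_diff\<close>.\<close>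

lemma set_dist_mult:
  assumes A: "A \<in> carrier_mat N N" and B: "unitary N B" and c: "cmod c = 1"
    and S_unitary: "\<And>P. P \<in> S \<Longrightarrow> unitary N P" and S_nonempty: "S \<noteq> {}"
    and S_closed: "\<And>P Q. P \<in> S \<Longrightarrow> Q \<in> S \<Longrightarrow> c \<cdot>\<^sub>m (P * Q) \<in> S"
  shows "set_dist (c \<cdot>\<^sub>m (A * B)) S \<le> set_dist A S + set_dist B S"
proof (rule field_le_epsilon)
  fix e :: real assume "e > 0"
  have Bc: "B \<in> carrier_mat N N" using B by (rule unitary_carrier)
  have dims: "dim_row A = N" "dim_row B = N" "dim_row (c \<cdot>\<^sub>m (A * B)) = N" using A Bc by auto
  define s where "s = sqrt (2 * real N)"
  have s: "s \<ge> 0" unfolding s_def by simp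
  obtain P a where P: "P \<in> S" and a: "cmod a = 1"
    and err_A: "fnorm (a \<cdot>\<^sub>m A - P) / s < set_dist A S + e / 2"
    using set_dist_approx[OF _ S_nonempty, of A "set_dist A S + e / 2"] \<open>e > 0\<close> dims
    unfolding s_def by auto
  obtain Q b where Q: "Q \<in> S" and b: "cmod b = 1"
    and err_B: "fnorm (b \<cdot>\<^sub>m B - Q) / s < set_dist B S + e / 2"
    using set_dist_approx[OF _ S_nonempty, of B "set_dist B S + e / 2"] \<open>e > 0\<close> dims
    unfolding s_def by auto
  have Pc: "P \<in> carrier_mat N N" and Qc: "Q \<in> carrier_mat N N"
    using S_unitary[OF P] S_unitary[OF Q] by (auto simp: unitary_carrier)
  have "(a * b) \<cdot>\<^sub>m (c \<cdot>\<^sub>m (A * B)) - c \<cdot>\<^sub>m (P * Q) = c \<cdot>\<^sub>m ((a \<cdot>\<^sub>m A) * (b \<cdot>\<^sub>m B) - P * Q)"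
    unfolding smult_mult_smult[OF A Bc]
    by (rule eq_matI) (use A Bc Pc Qc in \<open>auto simp: algebra_simps\<close>)
  then have err: "fnorm ((a * b) \<cdot>\<^sub>m (c \<cdot>\<^sub>m (A * B)) - c \<cdot>\<^sub>m (P * Q))
      \<le> fnorm (a \<cdot>\<^sub>m A - P) + fnorm (b \<cdot>\<^sub>m B - Q)"
    using fnorm_mult_diff[of "a \<cdot>\<^sub>m A" N Q "b \<cdot>\<^sub>m B" P] A Qc unitary_smult[OF b B] S_unitary[OF P]
    by (simp add: fnorm_smult c)
  have "set_dist (c \<cdot>\<^sub>m (A * B)) S \<le> fnorm ((a * b) \<cdot>\<^sub>m (c \<cdot>\<^sub>m (A * B)) - c \<cdot>\<^sub>m (P * Q)) / s"
    using set_dist_le[OF S_closed[OF P Q], of "a * b" "c \<cdot>\<^sub>m (A * B)"] a b dims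
    unfolding s_def by (simp add: norm_mult)
  also have "\<dots> \<le> (fnorm (a \<cdot>\<^sub>m A - P) + fnorm (b \<cdot>\<^sub>m B - Q)) / s"
    by (rule divide_right_mono[OF err s])
  also have "\<dots> = fnorm (a \<cdot>\<^sub>m A - P) / s + fnorm (b \<cdot>\<^sub>m B - Q) / s"
    by (rule add_divide_distrib)
  also have "\<dots> < set_dist A S + set_dist B S + e"
    using err_A err_B by linarith
  finally show "set_dist (c \<cdot>\<^sub>m (A * B)) S \<le> set_dist A S + set_dist B S + e"
    by (rule less_imp_le)
qed

lemma set_dist_pauli_group_mult:
  assumes "A \<in> carrier_mat (2 ^ n) (2 ^ n)" "unitary (2 ^ n) B"
  shows "set_dist ((\<i> ^ k) \<cdot>\<^sub>m (A * B)) (pauli_group n)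
           \<le> set_dist A (pauli_group n) + set_dist B (pauli_group n)"
  by (rule set_dist_mult[OF assms])
    (auto simp: norm_power pauli_group_unitary pauli_group_nonempty pauli_group_mult)

text \<open>Conjugation by \<open>U\<close> is multiplicative, so \<open>U \<sigma>\<^sub>y U\<^sup>\<dagger>\<close> is, up to a power of \<open>\<i>\<close>, the
  product of the conjugates of \<open>\<sigma>\<^sub>x\<close> and \<open>\<sigma>\<^bsub>x \<oplus> y\<^esub>\<close>, for every \<open>x\<close>.\<close>

lemma conj_mult:
  assumes U: "unitary N U" and W: "W \<in> carrier_mat N N" and V: "V \<in> carrier_mat N N"
  shows "(U * W * adj U) * (U * V * adj U) = U * (W * V) * adj U"
proof -
  have Uc: "U \<in> carrier_mat N N" "adj U \<in> carrier_mat N N" and Uu: "adj U * U = 1\<^sub>m N"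
    using U unfolding unitary_def by auto
  have UW: "U * W \<in> carrier_mat N N" and VU: "V * adj U \<in> carrier_mat N N"
    using Uc W V by auto
  have cancel: "adj U * (U * (V * adj U)) = V * adj U"
    unfolding assoc_mult_mat[OF Uc(2) Uc(1) VU, symmetric] Uu by (rule left_mult_one_mat[OF VU])
  have "(U * W * adj U) * (U * V * adj U) = (U * W) * (adj U * (U * (V * adj U)))"
    unfolding assoc_mult_mat[OF UW Uc(2) mult_carrier_mat[OF Uc(1) VU]]
      assoc_mult_mat[OF Uc(1) V Uc(2)] by (rule refl)
  also have "\<dots> = (U * W) * (V * adj U)"
    unfolding cancel by (rule refl)
  also have "\<dots> = U * (W * V) * adj U"
    unfolding assoc_mult_mat[OF Uc(1) W VU] assoc_mult_mat[OF Uc(1) mult_carrier_mat[OF W V] Uc(2)]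
      assoc_mult_mat[OF W V Uc(2)] by (rule refl)
  finally show ?thesis .
qed

lemma conj_pauli_str_mult:
  assumes U: "unitary (2 ^ n) U" and x: "x \<in> pauli_idx n" and y: "y \<in> pauli_idx n"
  obtains k where "U * pauli_str y * adj U =
      (\<i> ^ k) \<cdot>\<^sub>m ((U * pauli_str x * adj U) * (U * pauli_str (map2 (XOR) x y) * adj U))"
proof -
  let ?z = "map2 (XOR) x y"
  have z: "?z \<in> pauli_idx n" by (rule pauli_idx_xor[OF x y])
  have len: "length x = n" "length y = n" "length ?z = n" using x y z by (auto simp: pauli_idx_def)
  obtain k where k: "pauli_str x * pauli_str ?z = (\<i> ^ k) \<cdot>\<^sub>m pauli_str y"
    using pauli_str_mult[of x ?z] x z map2_xor_cancel_left[of x y] len by (auto simp: pauli_idx_def)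
  have Uc: "U \<in> carrier_mat (2 ^ n) (2 ^ n)" "adj U \<in> carrier_mat (2 ^ n) (2 ^ n)"
    using U by (auto simp: unitary_def)
  have S: "pauli_str x \<in> carrier_mat (2 ^ n) (2 ^ n)" "pauli_str y \<in> carrier_mat (2 ^ n) (2 ^ n)"
    "pauli_str ?z \<in> carrier_mat (2 ^ n) (2 ^ n)"
    using pauli_str_carrier[of x] pauli_str_carrier[of y] pauli_str_carrier[of ?z] len by simp_all
  have "(U * pauli_str x * adj U) * (U * pauli_str ?z * adj U) = U * (pauli_str x * pauli_str ?z) * adj U"
    by (rule conj_mult[OF U S(1) S(3)])
  also have "\<dots> = (\<i> ^ k) \<cdot>\<^sub>m (U * pauli_str y * adj U)"
    unfolding k mult_smult_distrib[OF Uc(1) S(2)]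
    by (rule mult_smult_assoc_mat[OF mult_carrier_mat[OF Uc(1) S(2)] Uc(2)])
  finally have prod: "(U * pauli_str x * adj U) * (U * pauli_str ?z * adj U)
      = (\<i> ^ k) \<cdot>\<^sub>m (U * pauli_str y * adj U)" .
  have "\<i> ^ (3 * k) * \<i> ^ k = \<i> ^ (4 * k)" by (simp add: power_add[symmetric])
  also have "\<dots> = 1" by (simp add: power_mult)
  finally have phase: "\<i> ^ (3 * k) * \<i> ^ k = 1" .
  have "U * pauli_str y * adj U
      = (\<i> ^ (3 * k)) \<cdot>\<^sub>m ((U * pauli_str x * adj U) * (U * pauli_str ?z * adj U))"
    by (simp add: prod smult_smult_mat phase)
  then show ?thesis by (rule that)
qed

section \<open>A pigeonhole argument\<close>

lemma more_than_half_meets_image: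
  assumes T: "finite T" and G: "G \<subseteq> T" "f ` G \<subseteq> T" and inj: "inj_on f G"
    and large: "card T < 2 * card G"
  shows "\<exists>x\<in>G. f x \<in> G"
proof (rule ccontr)
  assume "\<not> (\<exists>x\<in>G. f x \<in> G)"
  then have disjoint: "G \<inter> f ` G = {}" by auto
  have "finite G" using T G(1) by (rule finite_subset[rotated])
  then have "card G + card (f ` G) = card (G \<union> f ` G)"
    using disjoint by (simp add: card_Un_disjoint)
  also have "\<dots> \<le> card T" using T G by (intro card_mono) auto
  finally show False using large card_image[OF inj] by linarith
qed

lemma large_set_meets_xor_shift:
  assumes G: "G \<subseteq> pauli_idx n" and y: "y \<in> pauli_idx n" and large: "card (pauli_idx n) < 2 * card G"
  shows "\<exists>x\<in>G. map2 (XOR) x y \<in> G"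
proof (rule more_than_half_meets_image[OF pauli_idx_finite G _ _ large])
  show "(\<lambda>x. map2 (XOR) x y) ` G \<subseteq> pauli_idx n" using G pauli_idx_xor[OF _ y] by auto
  have "inj_on (\<lambda>x. map2 (XOR) x y) (pauli_idx n)"
    by (rule inj_on_inverseI[where g = "\<lambda>x. map2 (XOR) x y"])
      (use y in \<open>auto simp: pauli_idx_def map2_xor_cancel_right\<close>)
  then show "inj_on (\<lambda>x. map2 (XOR) x y) G" using G by (rule inj_on_subset)
qed

text \<open>The hypothesis of the theorem is used only through \<open>2/3 > 1/2\<close>.\<close>

lemma two_thirds_gt_half:
  assumes "finite T" "T \<noteq> {}" "real (card G) \<ge> 2 / 3 * real (card T)"
  shows "card T < 2 * card G"
proof -
  have "real (card T) > 0" using assms(1,2) by (simp add: card_gt_0_iff)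
  then have "real (card T) < real (2 * card G)"
    using assms(3) unfolding of_nat_mult of_nat_numeral by linarith
  then show ?thesis by (rule of_nat_less_imp_less)
qed

theorem lemma5:
  fixes n :: nat and U :: "complex mat" and \<delta> :: real
  assumes "n \<ge> 1"
    and "unitary (2 ^ n) U"
    and "\<delta> \<ge> 0"
    and "real (card {x \<in> pauli_idx n. set_dist (U * pauli_str x * adj U) (pauli_group n) \<le> \<delta>})
           \<ge> 2 / 3 * real (card (pauli_idx n))"
  shows "\<forall>y \<in> pauli_idx n. set_dist (U * pauli_str y * adj U) (pauli_group n) \<le> 2 * \<delta>"
proof
  fix y assume y: "y \<in> pauli_idx n"
  define A where "A x = U * pauli_str x * adj U" for x
  define G where "G = {x \<in> pauli_idx n. set_dist (A x) (pauli_group n) \<le> \<delta>}"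
  have unitary_A: "unitary (2 ^ n) (A x)" if "x \<in> pauli_idx n" for x
    unfolding A_def by (rule unitary_conj[OF assms(2) pauli_idx_unitary[OF that]])
  have "card (pauli_idx n) < 2 * card G"
    unfolding G_def A_def
    by (rule two_thirds_gt_half[OF pauli_idx_finite _ assms(4)]) (use pauli_idx_nonempty in blast)
  moreover have "G \<subseteq> pauli_idx n" by (auto simp: G_def)
  ultimately obtain x where "x \<in> G" "map2 (XOR) x y \<in> G"
    using large_set_meets_xor_shift[OF _ y] by blast
  then have x: "x \<in> pauli_idx n" "set_dist (A x) (pauli_group n) \<le> \<delta>"
    and xy: "map2 (XOR) x y \<in> pauli_idx n" "set_dist (A (map2 (XOR) x y)) (pauli_group n) \<le> \<delta>"
    by (simp_all add: G_def)
  obtain k where k: "A y = (\<i> ^ k) \<cdot>\<^sub>m (A x * A (map2 (XOR) x y))"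
    using conj_pauli_str_mult[OF assms(2) x(1) y] unfolding A_def by blast
  have "set_dist (A y) (pauli_group n)
      \<le> set_dist (A x) (pauli_group n) + set_dist (A (map2 (XOR) x y)) (pauli_group n)"
    unfolding k
    by (rule set_dist_pauli_group_mult[OF unitary_carrier[OF unitary_A[OF x(1)]] unitary_A[OF xy(1)]])
  also have "\<dots> \<le> 2 * \<delta>" using x(2) xy(2) by simp
  finally show "set_dist (U * pauli_str y * adj U) (pauli_group n) \<le> 2 * \<delta>"
    unfolding A_def .
qed

end
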